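(* Let $\kappa=4$. For each of the rooted trees $((a,b),c)$, $((a,c),b)$, $((b,c),a)$, consider the polynomials of the corresponding form: for $((a,b),c)$ (indices ordered $a,b,c$) these are the entries of $$P_{+\cdot\cdot}\operatorname{Cof}(P_{\cdot+\cdot})^TP_{\cdot\cdot k}-P_{\cdot\cdot k}^T\operatorname{Cof}(P_{\cdot+\cdot})P_{+\cdot\cdot}^T,\qquad P_{\cdot\cdot k}\operatorname{Cof}(P_{+\cdot\cdot})P_{\cdot+\cdot}^T-P_{\cdot+\cdot}\operatorname{Cof}(P_{+\cdot\cdot})^TP_{\cdot\cdot k}^T,\quad k\in[4],$$ and for the other two trees the analogous polynomials obtained by permuting the roles of the taxa so that the cherry taxa play the roles of $a,b$ and the remaining taxon the role of $c$. Then all of these polynomials, for all three trees, vanish on every probability tensor $P$ arising from the CK Jukes–Cantor model on any of the three rooted trees with any edge lengths.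
   Context: For a 3-way tensor $P=(p_{ijk})$ with indices ordered $a,b,c$: $P_{+\cdot\cdot}$ has $(j,k)$-entry $\sum_ip_{ijk}$; $P_{\cdot+\cdot}$ has $(i,k)$-entry $\sum_jp_{ijk}$; $P_{\cdot\cdot k}$ has $(i,j)$-entry $p_{ijk}$; $^T$ is transpose; $\operatorname{Cof}(A)$ is the matrix of cofactors of $A$. CK Jukes–Cantor model on a rooted species tree with edge lengths (not necessarily ultrametric): with constant population size, a gene tree with one lineage per taxon is drawn under the multispecies coalescent, and a site evolves on it under the 4-state Jukes–Cantor process (equal off-diagonal rates, uniform stationary distribution) from the uniform root distribution, with a fixed scalar mutation rate; the site pattern distribution is the mixture over gene trees. *)

theory Defs
  imports "HOL-Analysis.Analysis" "HOL-Library.Numeral_Type"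
begin

text \<open>Matrix of cofactors: the (i,j) entry is the (i,j) cofactor of A, i.e. the
  determinant of A with row i replaced by the j-th unit row vector
  (Laplace expansion along row i shows this equals (-1)^(i+j) times the (i,j) minor).\<close>
definition cofactor_matrix :: "real^'n^'n \<Rightarrow> real^'n^'n" where
  "cofactor_matrix A = (\<chi> i j. det (\<chi> k l. if k = i then (if l = j then 1 else 0) else A $ k $ l))"

text \<open>3-way tensors over the 4 DNA states, indices ordered (a,b,c).\<close>
type_synonym tensor3 = "4 \<Rightarrow> 4 \<Rightarrow> 4 \<Rightarrow> real"

definition marg1 :: "tensor3 \<Rightarrow> real^4^4" where
  "marg1 P = (\<chi> j k. \<Sum>i\<in>UNIV. P i j k)"

definition marg2 :: "tensor3 \<Rightarrow> real^4^4" where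
  "marg2 P = (\<chi> i k. \<Sum>j\<in>UNIV. P i j k)"

definition slice3 :: "tensor3 \<Rightarrow> 4 \<Rightarrow> real^4^4" where
  "slice3 P k = (\<chi> i j. P i j k)"

definition polyA :: "tensor3 \<Rightarrow> 4 \<Rightarrow> real^4^4" where
  "polyA P k = marg1 P ** transpose (cofactor_matrix (marg2 P)) ** slice3 P k
             - transpose (slice3 P k) ** cofactor_matrix (marg2 P) ** transpose (marg1 P)"

definition polyB :: "tensor3 \<Rightarrow> 4 \<Rightarrow> real^4^4" where
  "polyB P k = slice3 P k ** cofactor_matrix (marg1 P) ** transpose (marg2 P)
             - marg2 P ** transpose (cofactor_matrix (marg1 P)) ** transpose (slice3 P k)"

datatype rtree3 = AB_C | AC_B | BC_A

text \<open>Reindex a tensor (indices a,b,c) so that the cherry taxa of the tree come first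
  and the remaining taxon last.\<close>
fun relabel :: "rtree3 \<Rightarrow> tensor3 \<Rightarrow> tensor3" where
  "relabel AB_C P = P"
| "relabel AC_B P = (\<lambda>x y z. P x z y)"
| "relabel BC_A P = (\<lambda>x y z. P z x y)"

text \<open>Jukes-Cantor transition probabilities: rate matrix with all off-diagonal rates
  equal to the mutation rate mu, time t; entries of exp(t Q).\<close>
definition jc :: "real \<Rightarrow> real \<Rightarrow> 4 \<Rightarrow> 4 \<Rightarrow> real" where
  "jc mu t r s = (if r = s then 1/4 + 3/4 * exp (-4 * mu * t) else 1/4 - 1/4 * exp (-4 * mu * t))"

text \<open>Site pattern distribution for a rooted gene tree ((X,Y),Z) with branch lengths
  lx, ly (pendant to X, Y), li (internal), lz (root to Z), uniform root distribution;
  the arguments x y z are the states at X, Y, Z.\<close>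
definition gtree :: "real \<Rightarrow> real \<Rightarrow> real \<Rightarrow> real \<Rightarrow> real \<Rightarrow> 4 \<Rightarrow> 4 \<Rightarrow> 4 \<Rightarrow> real" where
  "gtree mu lx ly li lz x y z =
     (\<Sum>r\<in>UNIV. \<Sum>s\<in>UNIV. (1/4) * jc mu lz r z * jc mu li r s * jc mu lx s x * jc mu ly s y)"

text \<open>CK distribution on the species tree ((X,Y),Z): pendant edge lengths tx, ty (to the
  cherry node), tz (from the root to Z), internal edge length l (coalescent units, constant
  population size). Mixture over gene trees under the multispecies coalescent:
  either X,Y coalesce in the internal edge at time u (density e^-u on [0,l]) and then with Z
  in the root population at time w (density e^-w), or no coalescence in the internal edge
  (prob. e^-l), then the first coalescence in the root population at time w1 (density 3 e^-3w1)
  of a uniformly random pair, followed by the last one after time w2 (density e^-w2).\<close>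
definition ck :: "real \<Rightarrow> real \<Rightarrow> real \<Rightarrow> real \<Rightarrow> real \<Rightarrow> tensor3" where
  "ck mu tx ty tz l x y z =
     (LBINT u:{0..l}. exp (- u) *
        (LBINT w:{0..}. exp (- w) * gtree mu (tx + u) (ty + u) (l - u + w) (tz + w) x y z))
   + exp (- l) *
     (LBINT w1:{0..}. 3 * exp (- 3 * w1) *
        (LBINT w2:{0..}. exp (- w2) * (1/3) *
           (  gtree mu (tx + l + w1) (ty + l + w1) w2 (tz + w1 + w2) x y z
            + gtree mu (tx + l + w1) (tz + w1) w2 (ty + l + w1 + w2) x z y
            + gtree mu (ty + l + w1) (tz + w1) w2 (tx + l + w1 + w2) y z x)))"

fun ck_model :: "rtree3 \<Rightarrow> real \<Rightarrow> real \<Rightarrow> real \<Rightarrow> real \<Rightarrow> real \<Rightarrow> tensor3" where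
  "ck_model AB_C mu ta tb tc l = ck mu ta tb tc l"
| "ck_model AC_B mu ta tb tc l = (\<lambda>i j k. ck mu ta tc tb l i k j)"
| "ck_model BC_A mu ta tb tc l = (\<lambda>i j k. ck mu tb tc ta l j k i)"

end

theory Submission
  imports Defs
begin

text \<open>The CK Jukes--Cantor distribution is invariant under every simultaneous permutation of the
  four states at the three leaves: the transition probabilities only record whether two states
  agree and the root distribution is uniform. An invariant tensor is determined by five numbers,
  one for each equality pattern of its index triple, so its marginals \<open>P\<^sub>+\<^sub>\<cdot>\<^sub>\<cdot>\<close>,
  \<open>P\<^sub>\<cdot>\<^sub>+\<^sub>\<cdot>\<close> and their cofactor matrices all have the shape \<open>\<alpha> I + \<beta> (J - I)\<close>. Such matrices
  are symmetric and commute, so the first family of polynomials becomes \<open>D S - S\<^sup>T D\<close> for one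
  such \<open>D\<close> and the slice \<open>S = P\<^sub>\<cdot>\<^sub>\<cdot>\<^sub>k\<close>, and its entries vanish by a single identity in the five
  numbers. The second family is the negated first family of the tensor with taxa \<open>a\<close>, \<open>b\<close>
  exchanged, and relabelling the taxa preserves invariance.\<close>

lemma finite_partial_bij_extends_to_bij:
  fixes R :: "('a \<times> 'a) set"
  assumes "finite R"
    and "\<And>x x' y y'. (x, x') \<in> R \<Longrightarrow> (y, y') \<in> R \<Longrightarrow> x = y \<longleftrightarrow> x' = y'"
  shows "\<exists>\<sigma>. bij \<sigma> \<and> (\<forall>(x, x') \<in> R. \<sigma> x = x')"
  using assms
proof (induction R rule: finite_induct)
  case empty
  show ?case using bij_id by blast
next
  case (insert p R)
  obtain z z' where p: "p = (z, z')" by fastforce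
  from insert obtain \<tau> where \<tau>: "bij \<tau>" "\<forall>(x, x') \<in> R. \<tau> x = x'" by blast
  define \<sigma> where "\<sigma> = Transposition.transpose (\<tau> z) z' \<circ> \<tau>"
  have "\<sigma> x = x'" if "(x, x') \<in> R" for x x'
  proof -
    have "\<tau> z = x' \<longleftrightarrow> z' = x'"
      using \<tau> that insert.prems[of z z' x x'] p by (auto simp: bij_def inj_eq)
    then show ?thesis using \<tau> that by (auto simp: \<sigma>_def transpose_def)
  qed
  moreover have "bij \<sigma>" using \<tau> by (simp add: \<sigma>_def bij_comp)
  ultimately show ?case using p by (auto simp: \<sigma>_def)
qed

definition permutation_invariant :: "('a \<Rightarrow> 'a \<Rightarrow> 'a \<Rightarrow> 'b) \<Rightarrow> bool" where
  "permutation_invariant P \<longleftrightarrow> (\<forall>\<sigma> x y z. bij \<sigma> \<longrightarrow> P (\<sigma> x) (\<sigma> y) (\<sigma> z) = P x y z)"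

lemma permutation_invariant_eq:
  assumes "permutation_invariant P"
    and "x = y \<longleftrightarrow> x' = y'" "y = z \<longleftrightarrow> y' = z'" "x = z \<longleftrightarrow> x' = z'"
  shows "P x y z = P x' y' z'"
proof -
  obtain \<sigma> where "bij \<sigma>" "\<sigma> x = x'" "\<sigma> y = y'" "\<sigma> z = z'"
    using finite_partial_bij_extends_to_bij[of "{(x, x'), (y, y'), (z, z')}"] assms(2-4) by fastforce
  with assms(1) show ?thesis unfolding permutation_invariant_def by metis
qed

definition pattern_tensor :: "'b \<Rightarrow> 'b \<Rightarrow> 'b \<Rightarrow> 'b \<Rightarrow> 'b \<Rightarrow> 'a \<Rightarrow> 'a \<Rightarrow> 'a \<Rightarrow> 'b" where
  "pattern_tensor p1 p2 p3 p4 p5 x y z =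
     (if x = y \<and> y = z then p1 else if x = y then p2 else if x = z then p3 else if y = z then p4 else p5)"

lemma permutation_invariant_pattern_tensor:
  fixes P :: "4 \<Rightarrow> 4 \<Rightarrow> 4 \<Rightarrow> 'b"
  assumes "permutation_invariant P"
  shows "P = pattern_tensor (P 1 1 1) (P 1 1 2) (P 1 2 1) (P 2 1 1) (P 1 2 3)"
proof (intro ext)
  fix x y z :: 4
  show "P x y z = pattern_tensor (P 1 1 1) (P 1 1 2) (P 1 2 1) (P 2 1 1) (P 1 2 3) x y z"
    unfolding pattern_tensor_def
    by (auto intro: permutation_invariant_eq[OF assms])
qed

lemma jc_bij: "inj \<sigma> \<Longrightarrow> jc mu t (\<sigma> r) (\<sigma> s) = jc mu t r s"
  by (simp add: jc_def inj_eq)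

lemma sum_sum_bij_reindex:
  fixes F :: "'a::finite \<Rightarrow> 'a \<Rightarrow> 'b::comm_monoid_add"
  assumes "bij \<sigma>"
  shows "(\<Sum>r\<in>UNIV. \<Sum>s\<in>UNIV. F (\<sigma> r) (\<sigma> s)) = (\<Sum>r\<in>UNIV. \<Sum>s\<in>UNIV. F r s)"
proof -
  have "(\<Sum>s\<in>UNIV. F (\<sigma> r) (\<sigma> s)) = (\<Sum>s\<in>UNIV. F (\<sigma> r) s)" for r
    by (rule sum.reindex_bij_betw[OF assms])
  then show ?thesis
    using sum.reindex_bij_betw[OF assms, of "\<lambda>r. \<Sum>s\<in>UNIV. F r s"] by simp
qed

lemma gtree_bij:
  assumes "bij \<sigma>"
  shows "gtree mu lx ly li lz (\<sigma> x) (\<sigma> y) (\<sigma> z) = gtree mu lx ly li lz x y z"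
  using sum_sum_bij_reindex[OF assms,
      of "\<lambda>r s. (1/4) * jc mu lz r (\<sigma> z) * jc mu li r s * jc mu lx s (\<sigma> x) * jc mu ly s (\<sigma> y)"]
  by (simp add: gtree_def jc_bij bij_is_inj[OF assms])

lemma permutation_invariant_ck: "permutation_invariant (ck mu tx ty tz l)"
  by (simp add: permutation_invariant_def ck_def gtree_bij)

lemma permutation_invariant_ck_model: "permutation_invariant (ck_model T mu ta tb tc l)"
  using permutation_invariant_ck by (cases T) (auto simp: permutation_invariant_def)

lemma permutation_invariant_relabel: "permutation_invariant P \<Longrightarrow> permutation_invariant (relabel T P)"
  by (cases T) (simp_all add: permutation_invariant_def)

definition diag_offdiag :: "'a \<Rightarrow> 'a \<Rightarrow> 'a::zero^'n^'n" where
  "diag_offdiag d e = (\<chi> i j. if i = j then d else e)"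

lemma transpose_diag_offdiag [simp]: "transpose (diag_offdiag d e) = diag_offdiag d e"
  by (simp add: diag_offdiag_def transpose_def vec_eq_iff)

lemma diag_offdiag_entry:
  "(diag_offdiag d e :: 'a::ring_1^'n^'n) $ i $ j = e + (d - e) * (if i = j then 1 else 0)"
  by (simp add: diag_offdiag_def)

lemma diag_offdiag_mult:
  fixes a b c d :: "'a::comm_ring_1"
  defines "x \<equiv> of_nat CARD('n) * b * d + (a - b) * d + b * (c - d)"
  shows "(diag_offdiag a b :: 'a^'n^'n) ** diag_offdiag c d = diag_offdiag (x + (a - b) * (c - d)) x"
  unfolding vec_eq_iff matrix_matrix_mult_def
  by (simp add: diag_offdiag_entry algebra_simps sum.distrib sum_distrib_left x_def
      if_distrib[of "\<lambda>t. _ * t"] cong: if_cong)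

lemma diag_offdiag_commutator_entry:
  fixes S :: "'a::comm_ring_1^'n^'n"
  shows "(diag_offdiag d e ** S - transpose S ** diag_offdiag d e) $ i $ j =
         (d - e) * (S $ i $ j - S $ j $ i) + e * ((\<Sum>m\<in>UNIV. S $ m $ j) - (\<Sum>m\<in>UNIV. S $ m $ i))"
  unfolding matrix_matrix_mult_def transpose_def
  by (simp add: diag_offdiag_entry algebra_simps sum.distrib sum_distrib_left sum_subtractf
      if_distrib[of "\<lambda>t. _ * t"] cong: if_cong)

lemma det_4: "det (A::'a::comm_ring_1^4^4) = A$1$1*A$2$2*A$3$3*A$4$4 - A$1$1*A$2$2*A$3$4*A$4$3 - A$1$1*A$2$3*A$3$2*A$4$4 + A$1$1*A$2$3*A$3$4*A$4$2 + A$1$1*A$2$4*A$3$2*A$4$3 - A$1$1*A$2$4*A$3$3*A$4$2 - A$1$2*A$2$1*A$3$3*A$4$4 + A$1$2*A$2$1*A$3$4*A$4$3 + A$1$2*A$2$3*A$3$1*A$4$4 - A$1$2*A$2$3*A$3$4*A$4$1 - A$1$2*A$2$4*A$3$1*A$4$3 + A$1$2*A$2$4*A$3$3*A$4$1 + A$1$3*A$2$1*A$3$2*A$4$4 - A$1$3*A$2$1*A$3$4*A$4$2 - A$1$3*A$2$2*A$3$1*A$4$4 + A$1$3*A$2$2*A$3$4*A$4$1 + A$1$3*A$2$4*A$3$1*A$4$2 - A$1$3*A$2$4*A$3$2*A$4$1 - A$1$4*A$2$1*A$3$2*A$4$3 + A$1$4*A$2$1*A$3$3*A$4$2 + A$1$4*A$2$2*A$3$1*A$4$3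 - A$1$4*A$2$2*A$3$3*A$4$1 - A$1$4*A$2$3*A$3$1*A$4$2 + A$1$4*A$2$3*A$3$2*A$4$1"
proof -
  have f1: "finite {2::4, 3, 4}" "1 \<notin> {2::4, 3, 4}" by auto
  have f2: "finite {3::4, 4}" "2 \<notin> {3::4, 4}" by auto
  have f3: "finite {4::4}" "3 \<notin> {4::4}" by auto
  show ?thesis
    unfolding det_def UNIV_4 sum_over_permutations_insert[OF f1]
      sum_over_permutations_insert[OF f2] sum_over_permutations_insert[OF f3] permutes_sing
    by (simp add: sign_swap_id permutation_swap_id sign_compose sign_id swap_id_eq
        permutation_compose algebra_simps)
qed

lemma cofactor_matrix_diag_offdiag:
  "cofactor_matrix (diag_offdiag a b :: real^4^4) =
     diag_offdiag ((a - b)^2 * (a + 2*b)) (- ((a - b)^2 * b))"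
  unfolding cofactor_matrix_def diag_offdiag_def vec_eq_iff forall_4 det_4
  by (simp add: power2_eq_square algebra_simps)

lemma marg1_pattern_tensor:
  "marg1 (pattern_tensor p1 p2 p3 p4 p5) = diag_offdiag (p1 + 3*p4) (p2 + p3 + 2*p5)"
  unfolding marg1_def diag_offdiag_def vec_eq_iff forall_4 sum_4 pattern_tensor_def by simp

lemma marg2_pattern_tensor:
  "marg2 (pattern_tensor p1 p2 p3 p4 p5) = diag_offdiag (p1 + 3*p3) (p2 + p4 + 2*p5)"
  unfolding marg2_def diag_offdiag_def vec_eq_iff forall_4 sum_4 pattern_tensor_def by simp

lemma polyA_entry_of_diag_offdiag:
  fixes P :: tensor3
  assumes M1: "marg1 P = diag_offdiag a b" and C2: "cofactor_matrix (marg2 P) = diag_offdiag c e"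
  shows "polyA P k $ i $ j = (a - b) * (c - e) * (P i j k - P j i k)
                            + (a * e + b * c + 2 * b * e) * (marg1 P $ j $ k - marg1 P $ i $ k)"
proof -
  define D :: "real^4^4" where "D = diag_offdiag (a * c + 3 * b * e) (a * e + b * c + 2 * b * e)"
  have D_eq: "diag_offdiag a b ** diag_offdiag c e = D" "diag_offdiag c e ** diag_offdiag a b = D"
    by (simp_all add: D_def diag_offdiag_mult algebra_simps)
  define S where "S = slice3 P k"
  have "polyA P k = D ** S - transpose S ** D"
    unfolding polyA_def M1 C2 S_def transpose_diag_offdiag
    by (simp add: matrix_mul_assoc[symmetric] D_eq)
  then have "polyA P k $ i $ j = (a * c + 3 * b * e - (a * e + b * c + 2 * b * e)) * (S $ i $ j - S $ j $ i)
      + (a * e + b * c + 2 * b * e) * ((\<Sum>m\<in>UNIV. S $ m $ j) - (\<Sum>m\<in>UNIV. S $ m $ i))"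
    unfolding D_def by (simp only: diag_offdiag_commutator_entry)
  then show ?thesis by (simp add: S_def slice3_def marg1_def algebra_simps)
qed

lemma polyA_pattern_tensor: "polyA (pattern_tensor p1 p2 p3 p4 p5) k = 0"
proof -
  define P :: tensor3 where "P = pattern_tensor p1 p2 p3 p4 p5"
  define a1 where "a1 = p1 + 3*p4"
  define b1 where "b1 = p2 + p3 + 2*p5"
  define a2 where "a2 = p1 + 3*p3"
  define b2 where "b2 = p2 + p4 + 2*p5"
  define c where "c = (a2 - b2)^2 * (a2 + 2*b2)"
  define e where "e = - ((a2 - b2)^2 * b2)"
  define \<delta> where "\<delta> = (a1 - b1) * (c - e)"
  define \<epsilon> where "\<epsilon> = a1 * e + b1 * c + 2 * b1 * e"
  have M1: "marg1 P = diag_offdiag a1 b1"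
    by (simp add: P_def marg1_pattern_tensor a1_def b1_def)
  have C2: "cofactor_matrix (marg2 P) = diag_offdiag c e"
    by (simp add: P_def marg2_pattern_tensor cofactor_matrix_diag_offdiag a2_def b2_def c_def e_def)
  have entry: "polyA P k $ i $ j = \<delta> * (P i j k - P j i k) + \<epsilon> * (marg1 P $ j $ k - marg1 P $ i $ k)"
    for i j
    unfolding \<delta>_def \<epsilon>_def by (rule polyA_entry_of_diag_offdiag[OF M1 C2])
  have \<delta>_factor: "\<delta> = (a1 - b1) * (a2 - b2)^2 * (a2 + 3*b2)"
    by (simp add: \<delta>_def c_def e_def algebra_simps)
  have \<epsilon>_factor: "\<epsilon> = (a2 - b2)^2 * (p3 - p4) * (a2 + 3*b2)"
    by (simp add: \<epsilon>_def c_def e_def a1_def b1_def a2_def b2_def power2_eq_square algebra_simps)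
  have key: "\<delta> * (p3 - p4) + \<epsilon> * (b1 - a1) = 0"
    unfolding \<delta>_factor \<epsilon>_factor by (simp add: algebra_simps)
  have "polyA P k $ i $ j = 0" for i j
  proof -
    consider "i = j" | "i \<noteq> j" "k = i" | "i \<noteq> j" "k = j" | "i \<noteq> j" "k \<noteq> i" "k \<noteq> j"
      by blast
    then show ?thesis
    proof cases
      case 2
      then show ?thesis unfolding entry M1 using key by (simp add: diag_offdiag_def P_def pattern_tensor_def)
    next
      case 3
      then have "polyA P k $ i $ j = - (\<delta> * (p3 - p4) + \<epsilon> * (b1 - a1))"
        unfolding entry M1 by (simp add: diag_offdiag_def P_def pattern_tensor_def algebra_simps)
      then show ?thesis using key by simp
    qed (unfold entry M1, simp_all add: diag_offdiag_def P_def pattern_tensor_def)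
  qed
  then show ?thesis by (simp add: P_def vec_eq_iff)
qed

definition swap_ab :: "('a \<Rightarrow> 'a \<Rightarrow> 'a \<Rightarrow> 'b) \<Rightarrow> 'a \<Rightarrow> 'a \<Rightarrow> 'a \<Rightarrow> 'b" where
  "swap_ab P i j k = P j i k"

lemma polyB_eq_uminus_polyA_swap_ab: "polyB P k = - polyA (swap_ab P) k"
proof -
  have "marg1 (swap_ab P) = marg2 P" "marg2 (swap_ab P) = marg1 P"
       "slice3 (swap_ab P) k = transpose (slice3 P k)"
    by (simp_all add: marg1_def marg2_def slice3_def swap_ab_def transpose_def)
  then show ?thesis by (simp add: polyA_def polyB_def)
qed

lemma swap_ab_pattern_tensor:
  "swap_ab (pattern_tensor p1 p2 p3 p4 p5) = pattern_tensor p1 p2 p4 p3 p5"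
  by (auto simp: swap_ab_def pattern_tensor_def fun_eq_iff)

theorem corollaryA2:
  fixes T T' :: rtree3 and mu ta tb tc l :: real and k :: 4
  assumes "mu > 0" and "ta > 0" and "tb > 0" and "tc > 0" and "l > 0"
  shows "polyA (relabel T' (ck_model T mu ta tb tc l)) k = 0
       \<and> polyB (relabel T' (ck_model T mu ta tb tc l)) k = 0"
proof -
  define P where "P = relabel T' (ck_model T mu ta tb tc l)"
  have "permutation_invariant P"
    unfolding P_def by (intro permutation_invariant_relabel permutation_invariant_ck_model)
  then have "P = pattern_tensor (P 1 1 1) (P 1 1 2) (P 1 2 1) (P 2 1 1) (P 1 2 3)"
    by (rule permutation_invariant_pattern_tensor)
  then have "polyA P k = 0 \<and> polyB P k = 0"
    by (metis polyA_pattern_tensor polyB_eq_uminus_polyA_swap_ab swap_ab_pattern_tensor minus_zero)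
  then show ?thesis unfolding P_def .
qed

end
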